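(* Let $A\in\mathbb{R}^{n\times m}$ with $n<m$ have nonzero columns $\alpha_1,\dots,\alpha_m$, let $c_{ij}=\langle\alpha_i,\alpha_j\rangle$, $\nu(i)=\max_{j\neq i}\frac{|c_{ij}|}{c_{ii}}$, and let $s$ be an integer with $1\le s\le m$. Let $k_{max}=\max_{\mathcal{T}\subseteq[m],|\mathcal{T}|=s}\Lambda_{max}(A_{\mathcal{T}}^TA_{\mathcal{T}})$ and $k_{min}=\min_{\mathcal{T}\subseteq[m],|\mathcal{T}|=s}\Lambda_{min}(A_{\mathcal{T}}^TA_{\mathcal{T}})$. Then $$\frac{k_{min}}{k_{max}}\ge\min_{h\neq l}\frac{c_{hh}}{c_{ll}}-2(s-1)\max_{i}\nu(i).$$
   Context: $[m]=\{1,\dots,m\}$. For $\mathcal{T}\subseteq[m]$, $A_{\mathcal{T}}$ is the submatrix of $A$ formed by the columns indexed by $\mathcal{T}$. $\Lambda_{max}(B)$, $\Lambda_{min}(B)$ denote the largest and smallest eigenvalues of a symmetric matrix $B$. The minimum is over $h,l\in[m]$ with $h\neq l$, and the maxima in $\nu(i)$ are over $j\in[m]\setminus\{i\}$. *)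

theory Defs
  imports "Jordan_Normal_Form.Char_Poly" "Jordan_Normal_Form.DL_Submatrix"
begin

text \<open>Columns are indexed 0..m-1 (instead of 1..m).\<close>

definition lambda_max :: "real mat \<Rightarrow> real" where
  "lambda_max B = Max {k. eigenvalue B k}"

definition lambda_min :: "real mat \<Rightarrow> real" where
  "lambda_min B = Min {k. eigenvalue B k}"

definition col_submat :: "real mat \<Rightarrow> nat set \<Rightarrow> real mat" where
  "col_submat A T = submatrix A {0..<dim_row A} T"

definition cc :: "real mat \<Rightarrow> nat \<Rightarrow> nat \<Rightarrow> real" where
  "cc A i j = col A i \<bullet> col A j"

definition nu :: "real mat \<Rightarrow> nat \<Rightarrow> real" where
  "nu A i = Max ((\<lambda>j. \<bar>cc A i j\<bar> / cc A i i) ` ({0..<dim_col A} - {i}))"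

definition k_max :: "real mat \<Rightarrow> nat \<Rightarrow> real" where
  "k_max A s = Max ((\<lambda>T. lambda_max ((col_submat A T)\<^sup>T * col_submat A T))
                    ` {T. T \<subseteq> {0..<dim_col A} \<and> card T = s})"

definition k_min :: "real mat \<Rightarrow> nat \<Rightarrow> real" where
  "k_min A s = Min ((\<lambda>T. lambda_min ((col_submat A T)\<^sup>T * col_submat A T))
                    ` {T. T \<subseteq> {0..<dim_col A} \<and> card T = s})"

end

theory Submission
  imports Defs "Jordan_Normal_Form.Spectral_Radius"
begin

text \<open>
  Every eigenvalue \<open>\<mu>\<close> of the Gram matrix \<open>A\<^sub>T\<^sup>T A\<^sub>T\<close> of \<open>s\<close> columns lies in a Gershgorin disc
  \<open>\<bar>\<mu> - c\<^sub>i\<^sub>i\<bar> \<le> x c\<^sub>i\<^sub>i\<close> with \<open>x = (s - 1) max\<^sub>i \<nu>(i)\<close>, because each of the \<open>s - 1\<close>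
  off-diagonal entries of row \<open>i\<close> is bounded by \<open>\<nu>(i) c\<^sub>i\<^sub>i\<close>. Hence \<open>k\<^sub>m\<^sub>i\<^sub>n \<ge> (1 - x) c\<^sub>i\<^sub>i\<close> and
  \<open>k\<^sub>m\<^sub>a\<^sub>x \<le> (1 + x) c\<^sub>j\<^sub>j\<close> for some \<open>i, j\<close>. The minimal ratio \<open>r\<close> of column norms satisfies
  \<open>r \<le> c\<^sub>i\<^sub>i / c\<^sub>j\<^sub>j\<close> and \<open>r \<le> 1\<close>, so \<open>k\<^sub>m\<^sub>i\<^sub>n / k\<^sub>m\<^sub>a\<^sub>x \<ge> r (1 - x) / (1 + x) \<ge> r - 2x\<close>.
  That \<open>k\<^sub>m\<^sub>i\<^sub>n\<close> and \<open>k\<^sub>m\<^sub>a\<^sub>x\<close> are eigenvalues at all rests on real symmetric matrices having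
  a real eigenvalue.
\<close>

lemma nonzero_vec_obtain_index:
  assumes "v \<in> carrier_vec k" "v \<noteq> 0\<^sub>v k"
  obtains i where "i < k" "v $ i \<noteq> 0"
  using assms by (metis eq_vecI carrier_vecD index_zero_vec)

lemma eigenvector_row_eq:
  fixes B :: "'a :: comm_ring_1 mat"
  assumes B: "B \<in> carrier_mat k k" and v: "v \<in> carrier_vec k" "B *\<^sub>v v = a \<cdot>\<^sub>v v"
    and i: "i < k"
  shows "(\<Sum>j=0..<k. B $$ (i,j) * v $ j) = a * v $ i"
proof -
  have "(\<Sum>j=0..<k. B $$ (i,j) * v $ j) = (B *\<^sub>v v) $ i"
    using B v(1) i by (auto simp: scalar_prod_def intro!: sum.cong)
  also have "\<dots> = a * v $ i" using v i by simp
  finally show ?thesis .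
qed

lemma eigenvalueI_row_eqs:
  fixes B :: "'a :: comm_ring_1 mat"
  assumes B: "B \<in> carrier_mat k k" and f: "i < k" "f i \<noteq> 0"
    and eq: "\<And>i. i < k \<Longrightarrow> (\<Sum>j=0..<k. B $$ (i,j) * f j) = a * f i"
  shows "eigenvalue B a"
proof -
  have "eigenvector B (vec k f) a"
    unfolding eigenvector_def
  proof (intro conjI)
    show "vec k f \<noteq> 0\<^sub>v (dim_row B)"
      using B f by (metis carrier_matD(1) index_vec index_zero_vec(1))
    show "B *\<^sub>v vec k f = a \<cdot>\<^sub>v vec k f"
      using B eq by (intro eq_vecI) (auto simp: scalar_prod_def)
  qed (use B in auto)
  then show ?thesis unfolding eigenvalue_def by auto
qed

lemma symmetric_bilinear_sum_swap:
  fixes B :: "'a :: comm_semiring_0 mat"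
  assumes sym: "\<And>i j. i < k \<Longrightarrow> j < k \<Longrightarrow> B $$ (i,j) = B $$ (j,i)"
  shows "(\<Sum>i=0..<k. y i * (\<Sum>j=0..<k. B $$ (i,j) * x j))
       = (\<Sum>i=0..<k. x i * (\<Sum>j=0..<k. B $$ (i,j) * y j))"
proof -
  have "(\<Sum>i=0..<k. y i * (\<Sum>j=0..<k. B $$ (i,j) * x j))
      = (\<Sum>i=0..<k. \<Sum>j=0..<k. y i * B $$ (i,j) * x j)"
    by (simp add: sum_distrib_left mult.assoc)
  also have "\<dots> = (\<Sum>j=0..<k. \<Sum>i=0..<k. y i * B $$ (i,j) * x j)"
    by (rule sum.swap)
  also have "\<dots> = (\<Sum>j=0..<k. x j * (\<Sum>i=0..<k. B $$ (j,i) * y i))"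
    by (simp add: sum_distrib_left sym mult.commute mult.left_commute)
  finally show ?thesis .
qed

text \<open>
  For a complex eigenpair \<open>(a + i b, x + i y)\<close> of a real symmetric \<open>B\<close>, symmetry gives
  \<open>y\<^sup>T B x = x\<^sup>T B y\<close>, i.e.\ \<open>b (\<parallel>x\<parallel>\<^sup>2 + \<parallel>y\<parallel>\<^sup>2) = 0\<close>; so \<open>b = 0\<close> and \<open>x\<close> or \<open>y\<close> is a real eigenvector.
\<close>
lemma symmetric_real_mat_has_eigenvalue:
  fixes B :: "real mat"
  assumes B: "B \<in> carrier_mat k k" and k: "0 < k"
    and sym: "\<And>i j. i < k \<Longrightarrow> j < k \<Longrightarrow> B $$ (i,j) = B $$ (j,i)"
  shows "\<exists>a. eigenvalue B a"
proof -
  define Bc where "Bc = map_mat complex_of_real B"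
  have Bc: "Bc \<in> carrier_mat k k" using B unfolding Bc_def by auto
  from spectrum_non_empty[OF Bc k] obtain z v
    where "v \<in> carrier_vec k" "v \<noteq> 0\<^sub>v k" "Bc *\<^sub>v v = z \<cdot>\<^sub>v v"
    using Bc unfolding spectrum_def eigenvalue_def eigenvector_def by auto
  note v = this
  define x where "x j = Re (v $ j)" for j
  define y where "y j = Im (v $ j)" for j
  have row: "(\<Sum>j=0..<k. complex_of_real (B $$ (i,j)) * v $ j) = z * v $ i" if "i < k" for i
    using eigenvector_row_eq[OF Bc v(1,3) that] B that unfolding Bc_def by simp
  have ex: "(\<Sum>j=0..<k. B $$ (i,j) * x j) = Re z * x i - Im z * y i" if "i < k" for i
    using arg_cong[OF row[OF that], of Re] unfolding x_def y_def by (simp add: Re_sum)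
  have ey: "(\<Sum>j=0..<k. B $$ (i,j) * y j) = Im z * x i + Re z * y i" if "i < k" for i
    using arg_cong[OF row[OF that], of Im] unfolding x_def y_def by (simp add: Im_sum algebra_simps)
  from symmetric_bilinear_sum_swap[where B = B and k = k and x = x and y = y, OF sym]
  have "(\<Sum>i=0..<k. y i * (Re z * x i - Im z * y i)) = (\<Sum>i=0..<k. x i * (Im z * x i + Re z * y i))"
    using ex ey by simp
  then have "Im z * ((\<Sum>i=0..<k. x i ^ 2) + (\<Sum>i=0..<k. y i ^ 2)) = 0"
    by (simp add: algebra_simps sum_subtractf sum.distrib sum_distrib_left power2_eq_square)
  moreover obtain i0 where i0: "i0 < k" "v $ i0 \<noteq> 0"
    using nonzero_vec_obtain_index[OF v(1,2)] .
  then have xy: "x i0 \<noteq> 0 \<or> y i0 \<noteq> 0" unfolding x_def y_def using complex_eqI by force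
  then have "(\<Sum>i=0..<k. x i ^ 2) + (\<Sum>i=0..<k. y i ^ 2) > 0"
    unfolding sum.distrib[symmetric]
    by (intro sum_pos2[of _ i0]) (use i0 in \<open>auto simp: add_pos_nonneg add_nonneg_pos\<close>)
  ultimately have "Im z = 0" by simp
  then show ?thesis
    using xy eigenvalueI_row_eqs[OF B i0(1), of x "Re z"] eigenvalueI_row_eqs[OF B i0(1), of y "Re z"]
      ex ey by auto
qed

lemma finite_eigenvalues:
  fixes B :: "'a :: field mat"
  assumes "B \<in> carrier_mat k k"
  shows "finite {a. eigenvalue B a}"
  using card_finite_spectrum(1)[OF assms] unfolding spectrum_def by simp

lemma gershgorin_disc:
  fixes B :: "real mat"
  assumes B: "B \<in> carrier_mat k k" and e: "eigenvalue B a"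
  shows "\<exists>i<k. \<bar>a - B $$ (i,i)\<bar> \<le> (\<Sum>j\<in>{0..<k}-{i}. \<bar>B $$ (i,j)\<bar>)"
proof -
  obtain v where v: "v \<in> carrier_vec k" "v \<noteq> 0\<^sub>v k" "B *\<^sub>v v = a \<cdot>\<^sub>v v"
    using e B unfolding eigenvalue_def eigenvector_def by auto
  obtain i0 where i0: "i0 < k" "v $ i0 \<noteq> 0" using nonzero_vec_obtain_index[OF v(1,2)] .
  have fin: "finite ((\<lambda>j. \<bar>v $ j\<bar>) ` {0..<k})" "(\<lambda>j. \<bar>v $ j\<bar>) ` {0..<k} \<noteq> {}" using i0 by auto
  obtain i where i: "i < k" "\<bar>v $ i\<bar> = Max ((\<lambda>j. \<bar>v $ j\<bar>) ` {0..<k})"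
    using Max_in[OF fin] by auto
  have v_max: "\<bar>v $ j\<bar> \<le> \<bar>v $ i\<bar>" if "j < k" for j using i that fin by auto
  have "(a - B $$ (i,i)) * v $ i = (\<Sum>j\<in>{0..<k}-{i}. B $$ (i,j) * v $ j)"
    using eigenvector_row_eq[OF B v(1,3) i(1)] i(1) by (simp add: sum.remove algebra_simps)
  then have "\<bar>a - B $$ (i,i)\<bar> * \<bar>v $ i\<bar> = \<bar>\<Sum>j\<in>{0..<k}-{i}. B $$ (i,j) * v $ j\<bar>"
    by (metis abs_mult)
  also have "\<dots> \<le> (\<Sum>j\<in>{0..<k}-{i}. \<bar>B $$ (i,j) * v $ j\<bar>)"
    by (rule sum_abs)
  also have "\<dots> \<le> (\<Sum>j\<in>{0..<k}-{i}. \<bar>B $$ (i,j)\<bar> * \<bar>v $ i\<bar>)"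
    by (intro sum_mono) (auto simp: abs_mult intro!: mult_left_mono v_max)
  also have "\<dots> = (\<Sum>j\<in>{0..<k}-{i}. \<bar>B $$ (i,j)\<bar>) * \<bar>v $ i\<bar>"
    by (simp add: sum_distrib_right)
  finally show ?thesis
    using i(1) v_max[OF i0(1)] i0(2) by (auto simp: mult_le_cancel_right)
qed

lemma index_gram_mat:
  assumes "M \<in> carrier_mat r k" "a < k" "b < k"
  shows "(M\<^sup>T * M) $$ (a,b) = col M a \<bullet> col M b"
  using assms by simp

lemma gram_mat_symmetric:
  fixes M :: "'a :: comm_semiring_0 mat"
  assumes M: "M \<in> carrier_mat r k" and ab: "a < k" "b < k"
  shows "(M\<^sup>T * M) $$ (a,b) = (M\<^sup>T * M) $$ (b,a)"
proof -
  have "col M a \<bullet> col M b = col M b \<bullet> col M a"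
    using M ab by (intro comm_scalar_prod[of _ r]) auto
  then show ?thesis using M ab by simp
qed

lemma gram_mat_eigenvalue_nonneg:
  fixes M :: "real mat"
  assumes M: "M \<in> carrier_mat r k" and e: "eigenvalue (M\<^sup>T * M) a"
  shows "a \<ge> 0"
proof -
  obtain v where v: "v \<in> carrier_vec k" "v \<noteq> 0\<^sub>v k" "(M\<^sup>T * M) *\<^sub>v v = a \<cdot>\<^sub>v v"
    using e M unfolding eigenvalue_def eigenvector_def by auto
  have "(M\<^sup>T * M) *\<^sub>v v = M\<^sup>T *\<^sub>v (M *\<^sub>v v)"
    using M v by (auto intro: assoc_mult_mat_vec)
  then have "a * (v \<bullet> v) = (M\<^sup>T *\<^sub>v (M *\<^sub>v v)) \<bullet> v"
    using smult_scalar_prod_distrib[OF v(1) v(1), of a] v(3) by simp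
  also have "\<dots> = (M *\<^sub>v v) \<bullet> (M *\<^sub>v v)"
    by (rule transpose_vec_mult_scalar[OF M v(1)]) (use M v in auto)
  finally have "a * (v \<bullet> v) \<ge> 0"
    using conjugate_square_ge_0_vec[of "M *\<^sub>v v"] by simp
  moreover have "v \<bullet> v > 0" using conjugate_square_greater_0_vec[OF v(1)] v(2) by simp
  ultimately show ?thesis by (simp add: zero_le_mult_iff)
qed

lemma gram_mat_extremal_eigenvalues:
  fixes M :: "real mat"
  assumes M: "M \<in> carrier_mat r k" and k: "0 < k"
  shows "eigenvalue (M\<^sup>T * M) (lambda_min (M\<^sup>T * M))"
    and "eigenvalue (M\<^sup>T * M) (lambda_max (M\<^sup>T * M))"
proof -
  have G: "M\<^sup>T * M \<in> carrier_mat k k" using M by auto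
  have "{a. eigenvalue (M\<^sup>T * M) a} \<noteq> {}"
    using symmetric_real_mat_has_eigenvalue[OF G k gram_mat_symmetric[OF M]] by auto
  note ne = finite_eigenvalues[OF G] this
  show "eigenvalue (M\<^sup>T * M) (lambda_min (M\<^sup>T * M))"
    using Min_in[OF ne] unfolding lambda_min_def by simp
  show "eigenvalue (M\<^sup>T * M) (lambda_max (M\<^sup>T * M))"
    using Max_in[OF ne] unfolding lambda_max_def by simp
qed

lemma col_submat_dims:
  assumes A: "A \<in> carrier_mat n m" and T: "T \<subseteq> {0..<m}"
  shows "card {i. i < dim_row A \<and> i \<in> {0..<dim_row A}} = n"
    and "card {j. j < dim_col A \<and> j \<in> T} = card T"
proof -
  have "{i. i < dim_row A \<and> i \<in> {0..<dim_row A}} = {0..<n}" "{j. j < dim_col A \<and> j \<in> T} = T"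
    using A T by auto
  then show "card {i. i < dim_row A \<and> i \<in> {0..<dim_row A}} = n"
    and "card {j. j < dim_col A \<and> j \<in> T} = card T" by simp_all
qed

lemma col_submat_carrier:
  assumes "A \<in> carrier_mat n m" "T \<subseteq> {0..<m}"
  shows "col_submat A T \<in> carrier_mat n (card T)"
  using col_submat_dims[OF assms] unfolding col_submat_def
  by (intro carrier_matI) (simp_all only: dim_submatrix)

lemma pick_atLeastLessThan: "k < n \<Longrightarrow> pick {0..<n} k = k"
proof -
  assume "k < n"
  then have "{a\<in>{0..<n}. a < k} = {0..<k}" by auto
  with pick_card_in_set[of k "{0..<n}"] \<open>k < n\<close> show ?thesis by auto
qed

lemma col_col_submat:
  assumes A: "A \<in> carrier_mat n m" and T: "T \<subseteq> {0..<m}" and a: "a < card T"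
  shows "col (col_submat A T) a = col A (pick T a)"
proof (rule eq_vecI)
  have C: "col_submat A T \<in> carrier_mat n (card T)" by (rule col_submat_carrier[OF A T])
  show "dim_vec (col (col_submat A T) a) = dim_vec (col A (pick T a))" using A C by simp
  fix i assume "i < dim_vec (col A (pick T a))"
  then have i: "i < n" using A by simp
  have "pick T a \<in> T" using a by (rule pick_in_set_le)
  then have "pick T a < m" using T by auto
  moreover have "col_submat A T $$ (i, a) = A $$ (pick {0..<dim_row A} i, pick T a)"
    unfolding col_submat_def by (rule submatrix_index) (simp_all only: col_submat_dims[OF A T] i a)
  ultimately show "col (col_submat A T) a $ i = col A (pick T a) $ i"
    using A C i a by (simp add: pick_atLeastLessThan)
qed

lemma pick_inj_le:
  assumes "a < card T" "b < card T" "a \<noteq> b"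
  shows "pick T a \<noteq> pick T b"
  using assms pick_mono_le[of a T b] pick_mono_le[of b T a] by (cases "a < b") auto

lemma index_gram_col_submat:
  assumes A: "A \<in> carrier_mat n m" and T: "T \<subseteq> {0..<m}" and ab: "a < card T" "b < card T"
  shows "((col_submat A T)\<^sup>T * col_submat A T) $$ (a,b) = cc A (pick T a) (pick T b)"
  using index_gram_mat[OF col_submat_carrier[OF A T] ab] col_col_submat[OF A T] ab
  unfolding cc_def by simp

lemma cc_self_pos:
  assumes "A \<in> carrier_mat n m" "j < m" "col A j \<noteq> 0\<^sub>v n"
  shows "cc A j j > 0"
  using assms conjugate_square_greater_0_vec[of "col A j" n] unfolding cc_def by simp

lemma abs_cc_le_nu:
  assumes "i < dim_col A" "j < dim_col A" "j \<noteq> i" "cc A i i > 0"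
  shows "\<bar>cc A i j\<bar> \<le> nu A i * cc A i i"
proof -
  have "\<bar>cc A i j\<bar> / cc A i i \<le> nu A i"
    unfolding nu_def by (rule Max_ge) (use assms in auto)
  then show ?thesis using assms(4) by (simp add: pos_divide_le_eq)
qed

lemma gram_col_submat_eigenvalue_near_diag:
  assumes A: "A \<in> carrier_mat n m" and T: "T \<subseteq> {0..<m}" "card T = s"
    and pos: "\<And>j. j < m \<Longrightarrow> cc A j j > 0"
    and e: "eigenvalue ((col_submat A T)\<^sup>T * col_submat A T) \<mu>"
  shows "\<exists>i<m. \<bar>\<mu> - cc A i i\<bar> \<le> (real s - 1) * Max (nu A ` {0..<m}) * cc A i i"
proof -
  define M where "M = col_submat A T"
  define N where "N = Max (nu A ` {0..<m})"
  have M: "M \<in> carrier_mat n s" using col_submat_carrier[OF A T(1)] T(2) unfolding M_def by simp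
  have entry: "(M\<^sup>T * M) $$ (a,b) = cc A (pick T a) (pick T b)" if "a < s" "b < s" for a b
    using index_gram_col_submat[OF A T(1)] that T(2) unfolding M_def by simp
  have pick: "pick T a < m" if "a < s" for a
    using pick_in_set_le[of a T] that T by auto
  have G: "M\<^sup>T * M \<in> carrier_mat s s" using M by simp
  obtain a where a: "a < s"
    "\<bar>\<mu> - (M\<^sup>T * M) $$ (a,a)\<bar> \<le> (\<Sum>b\<in>{0..<s}-{a}. \<bar>(M\<^sup>T * M) $$ (a,b)\<bar>)"
    using gershgorin_disc[OF G e[folded M_def]] by blast
  define i where "i = pick T a"
  have i: "i < m" using pick[OF a(1)] unfolding i_def .
  have "(\<Sum>b\<in>{0..<s}-{a}. \<bar>(M\<^sup>T * M) $$ (a,b)\<bar>) \<le> (\<Sum>b\<in>{0..<s}-{a}. N * cc A i i)"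
  proof (rule sum_mono)
    fix b assume "b \<in> {0..<s}-{a}"
    then have b: "b < s" "b \<noteq> a" by auto
    have "pick T b < m" "pick T b \<noteq> i"
      using pick[OF b(1)] pick_inj_le[of b T a] b a(1) T(2) unfolding i_def by auto
    then have "\<bar>cc A i (pick T b)\<bar> \<le> nu A i * cc A i i"
      using abs_cc_le_nu[of i A "pick T b"] A i pos[OF i] by simp
    also have "\<dots> \<le> N * cc A i i"
    proof (rule mult_right_mono)
      show "nu A i \<le> N" unfolding N_def using i by (intro Max_ge) auto
    qed (use pos[OF i] in simp)
    finally show "\<bar>(M\<^sup>T * M) $$ (a,b)\<bar> \<le> N * cc A i i"
      unfolding entry[OF a(1) b(1)] i_def .
  qed
  also have "\<dots> = (real s - 1) * N * cc A i i"
    using a(1) by (simp add: of_nat_diff)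
  finally show ?thesis
    using a entry[OF a(1) a(1)] i unfolding N_def i_def by auto
qed

lemma k_min_k_max_eigenvalues:
  assumes A: "A \<in> carrier_mat n m" and s: "1 \<le> s" "s \<le> m"
  obtains T0 T1 where "T0 \<subseteq> {0..<m}" "card T0 = s"
      "eigenvalue ((col_submat A T0)\<^sup>T * col_submat A T0) (k_min A s)"
    and "T1 \<subseteq> {0..<m}" "card T1 = s"
      "eigenvalue ((col_submat A T1)\<^sup>T * col_submat A T1) (k_max A s)"
proof -
  define ST where "ST = {T. T \<subseteq> {0..<m} \<and> card T = s}"
  have fin: "finite ST" unfolding ST_def by (rule finite_subset[of _ "Pow {0..<m}"]) auto
  have "{0..<s} \<in> ST" unfolding ST_def using s by auto
  then have ne: "ST \<noteq> {}" by auto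
  have ev: "eigenvalue ((col_submat A T)\<^sup>T * col_submat A T) (lambda_min ((col_submat A T)\<^sup>T * col_submat A T))"
    "eigenvalue ((col_submat A T)\<^sup>T * col_submat A T) (lambda_max ((col_submat A T)\<^sup>T * col_submat A T))"
    if "T \<in> ST" for T
    using gram_mat_extremal_eigenvalues[OF col_submat_carrier[OF A]] that s unfolding ST_def by auto
  have dc: "dim_col A = m" using A by simp
  have "k_min A s \<in> (\<lambda>T. lambda_min ((col_submat A T)\<^sup>T * col_submat A T)) ` ST"
    unfolding k_min_def dc ST_def[symmetric] using fin ne by (intro Min_in) auto
  then obtain T0 where "T0 \<in> ST" "k_min A s = lambda_min ((col_submat A T0)\<^sup>T * col_submat A T0)"
    by blast
  moreover have "k_max A s \<in> (\<lambda>T. lambda_max ((col_submat A T)\<^sup>T * col_submat A T)) ` ST"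
    unfolding k_max_def dc ST_def[symmetric] using fin ne by (intro Max_in) auto
  then obtain T1 where "T1 \<in> ST" "k_max A s = lambda_max ((col_submat A T1)\<^sup>T * col_submat A T1)"
    by blast
  ultimately show ?thesis using that ev unfolding ST_def by auto
qed

lemma Min_ratio_le:
  fixes c :: "nat \<Rightarrow> real"
  assumes m: "2 \<le> m" and pos: "\<And>j. j < m \<Longrightarrow> c j > 0" and hl: "h < m" "l < m"
  shows "Min {c h' / c l' | h' l'. h' < m \<and> l' < m \<and> h' \<noteq> l'} \<le> c h / c l"
proof -
  let ?R = "{c h' / c l' | h' l'. h' < m \<and> l' < m \<and> h' \<noteq> l'}"
  have "?R \<subseteq> (\<lambda>(h', l'). c h' / c l') ` ({0..<m} \<times> {0..<m})" by auto
  then have fin: "finite ?R" by (rule finite_subset) auto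
  have le: "Min ?R \<le> c h' / c l'" if "h' < m" "l' < m" "h' \<noteq> l'" for h' l'
    using that by (intro Min_le[OF fin]) auto
  show ?thesis
  proof (cases "h = l")
    case True
    have "c 0 / c 1 \<le> 1 \<or> c 1 / c 0 \<le> 1"
      using pos[of 0] pos[of 1] m by (auto simp: divide_le_eq_1)
    then show ?thesis using le[of 0 1] le[of 1 0] m True pos[OF hl(2)] by auto
  qed (use le hl in auto)
qed

lemma divide_ge_of_relative_errors:
  fixes \<mu>\<^sub>1 \<mu>\<^sub>2 c\<^sub>1 c\<^sub>2 x r :: real
  assumes "\<mu>\<^sub>1 \<ge> 0" "\<mu>\<^sub>2 \<ge> 0" "\<bar>\<mu>\<^sub>1 - c\<^sub>1\<bar> \<le> x * c\<^sub>1" "\<bar>\<mu>\<^sub>2 - c\<^sub>2\<bar> \<le> x * c\<^sub>2"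
    and "c\<^sub>1 > 0" "c\<^sub>2 > 0" "r \<le> c\<^sub>1 / c\<^sub>2" "r \<le> 1"
  shows "\<mu>\<^sub>1 / \<mu>\<^sub>2 \<ge> r - 2 * x"
proof (cases "r - 2 * x \<le> 0")
  case True
  then show ?thesis using assms(1,2) by (smt (verit) divide_nonneg_nonneg)
next
  case False
  have "0 \<le> x * c\<^sub>1" using assms(3) by linarith
  then have x: "0 \<le> x" "x < 1/2" using assms(5,8) False by (simp_all add: zero_le_mult_iff)
  have \<mu>\<^sub>1: "\<mu>\<^sub>1 \<ge> c\<^sub>1 * (1 - x)" and \<mu>\<^sub>2: "\<mu>\<^sub>2 \<le> c\<^sub>2 * (1 + x)" "\<mu>\<^sub>2 \<ge> c\<^sub>2 * (1 - x)"
    using assms(3,4) by (auto simp: algebra_simps abs_le_iff)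
  have "c\<^sub>2 * (1 - x) > 0" using assms(6) x by simp
  then have \<mu>\<^sub>2_pos: "\<mu>\<^sub>2 > 0" using \<mu>\<^sub>2(2) by linarith
  have rc: "r * c\<^sub>2 \<le> c\<^sub>1" using assms(6,7) by (simp add: pos_le_divide_eq)
  have "(r - 2 * x) * \<mu>\<^sub>2 \<le> (r - 2 * x) * (c\<^sub>2 * (1 + x))"
    using False \<mu>\<^sub>2(1) by (intro mult_left_mono) auto
  also have "\<dots> \<le> r * c\<^sub>2 * (1 - x)"
  proof -
    have "x * (r * c\<^sub>2) \<le> x * ((1 + x) * c\<^sub>2)"
      using assms(6,8) x by (intro mult_left_mono mult_right_mono) auto
    then show ?thesis by (simp add: algebra_simps)
  qed
  also have "\<dots> \<le> c\<^sub>1 * (1 - x)" using rc x by (intro mult_right_mono) auto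
  also have "\<dots> \<le> \<mu>\<^sub>1" by (rule \<mu>\<^sub>1)
  finally show ?thesis using \<mu>\<^sub>2_pos by (simp add: pos_le_divide_eq)
qed

lemma two_le_dim_col_of_nonzero_cols:
  assumes A: "A \<in> carrier_mat n m" and "n < m" and "\<forall>j<m. col A j \<noteq> 0\<^sub>v n"
  shows "2 \<le> m"
proof (rule ccontr)
  assume "\<not> 2 \<le> m"
  then have "m = 1" "n = 0" using assms(2) by auto
  then have "col A 0 = 0\<^sub>v n" using A by (intro eq_vecI) auto
  then show False using assms(3) \<open>m = 1\<close> by auto
qed

theorem theorem2:
  fixes A :: "real mat" and n m s :: nat
  assumes "A \<in> carrier_mat n m" and "n < m"
    and "\<forall>j<m. col A j \<noteq> 0\<^sub>v n"
    and "1 \<le> s" and "s \<le> m"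
  shows "k_min A s / k_max A s \<ge>
           Min {cc A h h / cc A l l | h l. h < m \<and> l < m \<and> h \<noteq> l}
           - 2 * (real s - 1) * Max (nu A ` {0..<m})"
proof -
  note A = assms(1)
  have pos: "\<And>j. j < m \<Longrightarrow> cc A j j > 0" using cc_self_pos[OF A] assms(3) by auto
  have m: "2 \<le> m" using two_le_dim_col_of_nonzero_cols[OF assms(1-3)] .
  obtain T0 T1 where T0: "T0 \<subseteq> {0..<m}" "card T0 = s"
      "eigenvalue ((col_submat A T0)\<^sup>T * col_submat A T0) (k_min A s)"
    and T1: "T1 \<subseteq> {0..<m}" "card T1 = s"
      "eigenvalue ((col_submat A T1)\<^sup>T * col_submat A T1) (k_max A s)"
    using k_min_k_max_eigenvalues[OF A assms(4,5)] .
  obtain i where i: "i < m"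
    "\<bar>k_min A s - cc A i i\<bar> \<le> (real s - 1) * Max (nu A ` {0..<m}) * cc A i i"
    using gram_col_submat_eigenvalue_near_diag[OF A T0(1,2) pos T0(3)] by auto
  obtain j where j: "j < m"
    "\<bar>k_max A s - cc A j j\<bar> \<le> (real s - 1) * Max (nu A ` {0..<m}) * cc A j j"
    using gram_col_submat_eigenvalue_near_diag[OF A T1(1,2) pos T1(3)] by auto
  let ?r = "Min {cc A h h / cc A l l | h l. h < m \<and> l < m \<and> h \<noteq> l}"
  have ratio_le: "?r \<le> cc A i i / cc A j j" "?r \<le> 1"
    using Min_ratio_le[where c = "\<lambda>j. cc A j j", OF m pos i(1) j(1)]
      Min_ratio_le[where c = "\<lambda>j. cc A j j", OF m pos i(1) i(1)] pos[OF i(1)]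
    by simp_all
  have "k_min A s \<ge> 0" "k_max A s \<ge> 0"
    using gram_mat_eigenvalue_nonneg[OF col_submat_carrier[OF A]] T0 T1 by auto
  then show ?thesis
    using divide_ge_of_relative_errors[OF _ _ i(2) j(2) pos[OF i(1)] pos[OF j(1)]
        ratio_le(1) ratio_le(2)]
    by (simp add: algebra_simps)
qed

end
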